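(* Let $d\le n$, $\beta\in\mathbb{R}^d$, $\epsilon\in\mathbb{R}^n$, $X\in\mathbb{R}^{n\times d}$, $G_n\subseteq\{1,\dots,n\}$, and $o\in\mathbb{R}^n$ with $o_i=0$ for all $i\notin G_n$; set $Y:=X\beta+\epsilon+o$. Assume there is a known $c_n\in\mathbb{N}$ with $|G_n|\le c_n$, let $a_n:=n-c_n$, and let $S_t$ be the set computed in the final iteration of Torrent run on $X,Y$ with threshold parameter $a_n$, and $\hat\beta^{n,a_n}_{\mathrm{Tor}}$ its output. For $S\subseteq\{1,\dots,n\}$ let $V(S):=(S\cup G_n^{\mathsf c})\setminus(G_n^{\mathsf c}\cap S)$, where $G_n^{\mathsf c}=\{1,\dots,n\}\setminus G_n$. Assume \[ \eta:=\max_{S\subseteq\{1,\dots,n\},\,|S|=a_n}\frac{\|X_{V(S)}\|_2}{\sqrt{\lambda_{\min}(X_S^\top X_S)}}<\frac{1}{\sqrt2}. \] Then \[ \|\hat\beta^{n,a_n}_{\mathrm{Tor}}-\beta\|_2\le\big\|(X_{S_t}^\top X_{S_t})^{-1}X_{S_t}^\top\epsilon_{S_t}\big\|_2+\frac{\sqrt2\|X_{V(S_t)}\|_2\big\|(X_{S_t}^\top X_{S_t})^{-1}X_{S_t}^\top\epsilon_{S_t}\big\|_2+\sqrt2\|\epsilon_{V(S_t)}\|_2}{\sqrt{\lambda_{\min}(X_{S_t}^\top X_{S_t})}\,(1-\sqrt2\eta)}. \]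
   Context: $\lambda_{\min}$ denotes the minimal eigenvalue and $\|\cdot\|_2$ the Euclidean norm for vectors and the spectral norm for matrices; $X_S,\epsilon_S$ denote rows/entries with indices in $S$. $\hat\beta^S_{\mathrm{OLS}}(X,Y):=(X_S^\top X_S)^{+}X_S^\top Y_S$. $\mathrm{HT}(v,a)$ is the set of indices of the $a$ smallest entries of $v$, ties broken by a fixed deterministic rule. Torrent with threshold $a$: $S_0=\{1,\dots,n\}$, $e=Y$, $\mathrm{err}=\infty$, $t=0$; while $\|e\|_2<\mathrm{err}$ (with $e$ indexed by the current set $S_t$): $t\gets t+1$, $\mathrm{err}\gets\|e\|_2$, $\hat\beta^t\gets\hat\beta^{S_{t-1}}_{\mathrm{OLS}}(X,Y)$, $v\gets|Y-X\hat\beta^t|$, $S_t\gets\mathrm{HT}(v,a)$, $e\gets|Y_{S_t}-X_{S_t}\hat\beta^t|$; output $\hat\beta^{n,a}_{\mathrm{Tor}}:=\hat\beta^t$. *)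

theory Defs
  imports "Jordan_Normal_Form.DL_Submatrix" "Jordan_Normal_Form.Char_Poly"
begin

text \<open>Indices are 0-based: rows 0..<n, columns 0..<d.\<close>

definition norm2 :: "real vec \<Rightarrow> real" where
  "norm2 v = sqrt (v \<bullet> v)"

definition spec_norm :: "real mat \<Rightarrow> real" where
  "spec_norm A = Sup {norm2 (A *\<^sub>v v) | v. v \<in> carrier_vec (dim_col A) \<and> norm2 v \<le> 1}"

definition lambda_min :: "real mat \<Rightarrow> real" where
  "lambda_min A = Min {k. eigenvalue A k}"

text \<open>Rows of X (entries of v) with indices in S, in increasing order.\<close>
definition rows :: "real mat \<Rightarrow> nat set \<Rightarrow> real mat" where
  "rows X S = submatrix X S UNIV"

definition subvec :: "real vec \<Rightarrow> nat set \<Rightarrow> real vec" where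
  "subvec v S = vec (card {i. i < dim_vec v \<and> i \<in> S}) (\<lambda>i. v $ pick S i)"

definition pinv :: "real mat \<Rightarrow> real mat" where
  "pinv A = (THE B. B \<in> carrier_mat (dim_col A) (dim_row A) \<and> A * B * A = A \<and> B * A * B = B
     \<and> transpose_mat (A * B) = A * B \<and> transpose_mat (B * A) = B * A)"

definition minv :: "real mat \<Rightarrow> real mat" where
  "minv A = (THE B. inverts_mat A B \<and> inverts_mat B A)"

definition ols :: "real mat \<Rightarrow> real vec \<Rightarrow> nat set \<Rightarrow> real vec" where
  "ols X Y S = pinv (transpose_mat (rows X S) * rows X S) *\<^sub>v (transpose_mat (rows X S) *\<^sub>v subvec Y S)"

text \<open>Specification of hard thresholding HT(v,a) on indices 0..<n: the set of indices of
  a smallest entries; ht is a fixed (deterministic) rule meeting this specification.\<close>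
definition is_HT :: "nat \<Rightarrow> ((nat \<Rightarrow> real) \<Rightarrow> nat \<Rightarrow> nat set) \<Rightarrow> bool" where
  "is_HT n ht \<longleftrightarrow> (\<forall>v a. a \<le> n \<longrightarrow>
      ht v a \<subseteq> {..<n} \<and> card (ht v a) = a \<and>
      (\<forall>i \<in> ht v a. \<forall>j<n. j \<notin> ht v a \<longrightarrow> v i \<le> v j))"

fun tor_S :: "((nat \<Rightarrow> real) \<Rightarrow> nat \<Rightarrow> nat set) \<Rightarrow> real mat \<Rightarrow> real vec \<Rightarrow> nat \<Rightarrow> nat \<Rightarrow> nat set" where
  "tor_S ht X Y a 0 = {..<dim_vec Y}"
| "tor_S ht X Y a (Suc t) =
     ht (\<lambda>i. \<bar>(Y - X *\<^sub>v ols X Y (tor_S ht X Y a t)) $ i\<bar>) a"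

definition tor_beta :: "((nat \<Rightarrow> real) \<Rightarrow> nat \<Rightarrow> nat set) \<Rightarrow> real mat \<Rightarrow> real vec \<Rightarrow> nat \<Rightarrow> nat \<Rightarrow> real vec" where
  "tor_beta ht X Y a t = ols X Y (tor_S ht X Y a (t - 1))"

definition tor_err :: "((nat \<Rightarrow> real) \<Rightarrow> nat \<Rightarrow> nat set) \<Rightarrow> real mat \<Rightarrow> real vec \<Rightarrow> nat \<Rightarrow> nat \<Rightarrow> real" where
  "tor_err ht X Y a t = (if t = 0 then norm2 Y else
     norm2 (map_vec abs (subvec Y (tor_S ht X Y a t) - rows X (tor_S ht X Y a t) *\<^sub>v tor_beta ht X Y a t)))"

text \<open>Index of the final iteration: the loop body runs at t = 1 (err = \<infinity>) and continues
  while the new residual norm is strictly smaller than the previous one.\<close>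
definition tor_T :: "((nat \<Rightarrow> real) \<Rightarrow> nat \<Rightarrow> nat set) \<Rightarrow> real mat \<Rightarrow> real vec \<Rightarrow> nat \<Rightarrow> nat" where
  "tor_T ht X Y a = (LEAST t. t \<ge> 1 \<and> \<not> tor_err ht X Y a t < tor_err ht X Y a (t - 1))"

definition torrent :: "((nat \<Rightarrow> real) \<Rightarrow> nat \<Rightarrow> nat set) \<Rightarrow> real mat \<Rightarrow> real vec \<Rightarrow> nat \<Rightarrow> real vec" where
  "torrent ht X Y a = tor_beta ht X Y a (tor_T ht X Y a)"

definition torrent_set :: "((nat \<Rightarrow> real) \<Rightarrow> nat \<Rightarrow> nat set) \<Rightarrow> real mat \<Rightarrow> real vec \<Rightarrow> nat \<Rightarrow> nat set" where
  "torrent_set ht X Y a = tor_S ht X Y a (tor_T ht X Y a)"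

definition Vset :: "nat \<Rightarrow> nat set \<Rightarrow> nat set \<Rightarrow> nat set" where
  "Vset n G S = (S \<union> ({..<n} - G)) - (({..<n} - G) \<inter> S)"

definition eta :: "real mat \<Rightarrow> nat \<Rightarrow> nat set \<Rightarrow> nat \<Rightarrow> real" where
  "eta X n G a = Max ((\<lambda>S. spec_norm (rows X (Vset n G S)) /
       sqrt (lambda_min (transpose_mat (rows X S) * rows X S))) ` {S. S \<subseteq> {..<n} \<and> card S = a})"

end

(*
  When Torrent stops, the residual norm has not decreased in the last step. Since the OLS fit
  on the previous index set minimises the residual there, this forces the final estimate b to
  satisfy the normal equations on the final set S as well: after the first step because the
  discarded residuals must vanish, later because the fit, and with it the selected set, did
  not change at all.

  Write b - beta = w + z with w the OLS fit of the noise on S. Then z is the OLS fit of the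
  outliers on S, so sqrt(lambda_min) |z| <= |o restricted to S \<inter> G|. Since S keeps the a
  smallest residuals and |S \<inter> G| <= |G^c - S|, the residuals at the outliers kept in S are
  dominated by residuals at clean indices outside S, which only involve epsilon and X (b - beta)
  on V(S). This yields sqrt(lambda_min) |z| <= sqrt 2 (|eps_V| + |X_V| (|w| + |z|)), and
  eta < 1/sqrt 2 lets one solve for |z|.
*)

theory Submission
  imports Defs "HOL-Analysis.L2_Norm"
begin

section \<open>Euclidean norms and sums of squares\<close>

lemma norm2_eq_L2_set: "norm2 v = L2_set (\<lambda>i. v $ i) {..<dim_vec v}"
  unfolding norm2_def L2_set_def scalar_prod_def
  by (simp add: power2_eq_square atLeast0LessThan)

lemma norm2_nonneg [simp]: "0 \<le> norm2 v"
  by (simp add: norm2_eq_L2_set)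

lemma norm2_power2: "(norm2 v)\<^sup>2 = v \<bullet> v"
  unfolding norm2_def by (simp add: scalar_prod_def sum_nonneg)

lemma norm2_smult: "norm2 (c \<cdot>\<^sub>v v) = \<bar>c\<bar> * norm2 v"
proof -
  have "norm2 (c \<cdot>\<^sub>v v) = L2_set (\<lambda>i. \<bar>c\<bar> * v $ i) {..<dim_vec v}"
    unfolding norm2_eq_L2_set L2_set_def by (simp add: power_mult_distrib)
  then show ?thesis unfolding norm2_eq_L2_set by (simp add: L2_set_right_distrib)
qed

lemma norm2_add_le:
  assumes "u \<in> carrier_vec d" "v \<in> carrier_vec d"
  shows "norm2 (u + v) \<le> norm2 u + norm2 v"
proof -
  have "norm2 (u + v) = L2_set (\<lambda>i. u $ i + v $ i) {..<d}"
    unfolding norm2_eq_L2_set using assms by (intro L2_set_cong) auto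
  also have "\<dots> \<le> L2_set (\<lambda>i. u $ i) {..<d} + L2_set (\<lambda>i. v $ i) {..<d}"
    by (rule L2_set_triangle_ineq)
  finally show ?thesis unfolding norm2_eq_L2_set using assms by simp
qed

lemma norm2_eq_0_iff:
  assumes "v \<in> carrier_vec d"
  shows "norm2 v = 0 \<longleftrightarrow> v = 0\<^sub>v d"
  using assms unfolding norm2_eq_L2_set by (auto simp: L2_set_eq_0_iff)

lemma norm2_zero_vec [simp]: "norm2 (0\<^sub>v n) = 0"
  by (simp add: norm2_def)

lemma norm2_map_vec_abs [simp]: "norm2 (map_vec abs v) = norm2 v"
  unfolding norm2_eq_L2_set L2_set_def by simp

lemma abs_scalar_prod_le_norm2:
  assumes "dim_vec u = dim_vec v"
  shows "\<bar>u \<bullet> v\<bar> \<le> norm2 u * norm2 v"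
proof -
  have "\<bar>u \<bullet> v\<bar> = \<bar>\<Sum>i<dim_vec v. u $ i * v $ i\<bar>"
    using assms by (simp add: scalar_prod_def atLeast0LessThan)
  also have "\<dots> \<le> (\<Sum>i<dim_vec v. \<bar>u $ i\<bar> * \<bar>v $ i\<bar>)"
    by (simp add: sum_abs abs_mult[symmetric])
  also have "\<dots> \<le> norm2 u * norm2 v"
    using L2_set_mult_ineq assms by (simp add: norm2_eq_L2_set)
  finally show ?thesis .
qed

lemma L2_set_le_sqrt2_union:
  assumes "finite A" "finite B" "A \<inter> B = {}"
  shows "L2_set f A + L2_set f B \<le> sqrt 2 * L2_set f (A \<union> B)"
proof -
  define x y where "x = L2_set f A" and "y = L2_set f B"
  have "(L2_set f (A \<union> B))\<^sup>2 = x\<^sup>2 + y\<^sup>2"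
    unfolding x_def y_def L2_set_def using assms by (simp add: sum.union_disjoint sum_nonneg)
  moreover have "(x + y)\<^sup>2 \<le> 2 * (x\<^sup>2 + y\<^sup>2)"
    using sum_squares_bound[of x y] by (simp add: power2_sum)
  ultimately have "(x + y)\<^sup>2 \<le> (sqrt 2 * L2_set f (A \<union> B))\<^sup>2"
    by (simp add: power_mult_distrib)
  then show ?thesis unfolding x_def y_def by (rule power2_le_imp_le) simp
qed

lemma sum_power2_le_of_abs_le:
  fixes f :: "'a \<Rightarrow> real"
  assumes B: "finite B" and card: "card A \<le> card B"
    and le: "\<And>i j. i \<in> A \<Longrightarrow> j \<in> B \<Longrightarrow> \<bar>f i\<bar> \<le> \<bar>f j\<bar>"
  shows "(\<Sum>i\<in>A. (f i)\<^sup>2) \<le> (\<Sum>j\<in>B. (f j)\<^sup>2)"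
proof (cases "A = {} \<or> infinite A")
  case True
  then show ?thesis by (auto intro!: sum_nonneg)
next
  case False
  then have "B \<noteq> {}" using card by auto
  define m where "m = Min ((\<lambda>j. (f j)\<^sup>2) ` B)"
  have "m \<in> (\<lambda>j. (f j)\<^sup>2) ` B" unfolding m_def using B \<open>B \<noteq> {}\<close> by simp
  then have m_nonneg: "0 \<le> m" and A_le_m: "\<And>i. i \<in> A \<Longrightarrow> (f i)\<^sup>2 \<le> m"
    using le by (auto simp: abs_le_square_iff)
  have m_le_B: "m \<le> (f j)\<^sup>2" if "j \<in> B" for j
    unfolding m_def using B that by simp
  have "(\<Sum>i\<in>A. (f i)\<^sup>2) \<le> card A * m" using sum_mono[OF A_le_m] by simp
  also have "\<dots> \<le> card B * m"
    using card m_nonneg by (intro mult_right_mono) simp_all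
  also have "\<dots> \<le> (\<Sum>j\<in>B. (f j)\<^sup>2)" using sum_mono[OF m_le_B] by simp
  finally show ?thesis .
qed

lemma sum_power2_le_0_imp_zero:
  fixes f :: "'a \<Rightarrow> real"
  assumes "finite A" and "(\<Sum>i\<in>A. (f i)\<^sup>2) \<le> 0"
  shows "\<forall>i\<in>A. f i = 0"
proof -
  have "(\<Sum>i\<in>A. (f i)\<^sup>2) = 0" using assms(2) sum_nonneg[of A "\<lambda>i. (f i)\<^sup>2"] by simp
  then show ?thesis using assms(1) by (simp add: sum_nonneg_eq_0_iff)
qed

lemma L2_set_diff_le: "L2_set (\<lambda>i. f i - g i) A \<le> L2_set f A + L2_set g A"
  using L2_set_triangle_ineq[of f "\<lambda>i. - g i" A] by (simp add: L2_set_def)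

lemma card_Int_le_card_Diff:
  assumes S: "S \<subseteq> {..<n}" and G: "G \<subseteq> {..<n}" and card: "card G \<le> n - card S"
  shows "card (S \<inter> G) \<le> card ({..<n} - G - S)"
proof -
  have fin: "finite S" "finite G" using S G finite_subset by blast+
  have "card S \<le> n" using card_mono[OF _ S] by simp
  have "{..<n} - G - S = {..<n} - (G \<union> S)" by blast
  moreover have "G \<union> S \<subseteq> {..<n}" using S G by blast
  ultimately have "card ({..<n} - G - S) = n - card (G \<union> S)"
    by (metis card_Diff_subset card_lessThan finite_Un fin)
  moreover have "card (G \<union> S) + card (S \<inter> G) = card G + card S"
    using card_Un_Int[OF fin(2,1)] by (simp add: inf_commute)
  ultimately show ?thesis using card \<open>card S \<le> n\<close> by linarith
qed

section \<open>Selecting rows and entries\<close>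

lemma bij_betw_pick:
  assumes "finite S"
  shows "bij_betw (pick S) {..<card S} S"
proof -
  have inj: "inj_on (pick S) {..<card S}"
    by (rule inj_onI, metis lessThan_iff nat_neq_iff pick_mono_le)
  moreover have "pick S ` {..<card S} \<subseteq> S" using pick_in_set_le by auto
  moreover have "card (pick S ` {..<card S}) = card S" using card_image[OF inj] by simp
  ultimately show ?thesis using card_subset_eq[OF assms] unfolding bij_betw_def by simp
qed

lemma card_lessThan_restrict: "S \<subseteq> {..<n} \<Longrightarrow> card {i. i < n \<and> i \<in> S} = card S"
  by (rule arg_cong[where f=card]) auto

lemma dim_subvec [simp]: "S \<subseteq> {..<dim_vec v} \<Longrightarrow> dim_vec (subvec v S) = card S"
  unfolding subvec_def using card_lessThan_restrict[of S "dim_vec v"] by simp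

lemma subvec_index: "S \<subseteq> {..<dim_vec v} \<Longrightarrow> k < card S \<Longrightarrow> subvec v S $ k = v $ pick S k"
  unfolding subvec_def using card_lessThan_restrict[of S "dim_vec v"] by simp

lemma subvec_minus:
  assumes u: "u \<in> carrier_vec n" and v: "v \<in> carrier_vec n" and S: "S \<subseteq> {..<n}"
  shows "subvec u S - subvec v S = subvec (u - v) S"
proof (rule eq_vecI)
  have dims: "S \<subseteq> {..<dim_vec u}" "S \<subseteq> {..<dim_vec v}" "S \<subseteq> {..<dim_vec (u - v)}"
    using u v S by auto
  then show "dim_vec (subvec u S - subvec v S) = dim_vec (subvec (u - v) S)" by simp
  fix k assume "k < dim_vec (subvec (u - v) S)"
  then have k: "k < card S" using dims by simp
  then have "pick S k < n" using pick_in_set_le S by blast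
  then show "(subvec u S - subvec v S) $ k = subvec (u - v) S $ k"
    using k dims u v by (simp add: subvec_index)
qed

lemma scalar_prod_subvec:
  assumes u: "u \<in> carrier_vec n" and v: "v \<in> carrier_vec n" and S: "S \<subseteq> {..<n}"
  shows "subvec u S \<bullet> subvec v S = (\<Sum>i\<in>S. u $ i * v $ i)"
proof -
  have dims: "S \<subseteq> {..<dim_vec u}" "S \<subseteq> {..<dim_vec v}" using u v S by auto
  have "finite S" using S finite_subset by blast
  have "subvec u S \<bullet> subvec v S = (\<Sum>k\<in>{0..<card S}. subvec u S $ k * subvec v S $ k)"
    using dims by (simp add: scalar_prod_def)
  also have "\<dots> = (\<Sum>k<card S. u $ pick S k * v $ pick S k)"
    using dims by (simp add: subvec_index atLeast0LessThan)
  also have "\<dots> = (\<Sum>i\<in>S. u $ i * v $ i)"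
    using sum.reindex_bij_betw[OF bij_betw_pick[OF \<open>finite S\<close>]] by simp
  finally show ?thesis .
qed

lemma norm2_subvec:
  assumes "v \<in> carrier_vec n" "S \<subseteq> {..<n}"
  shows "norm2 (subvec v S) = L2_set (\<lambda>i. v $ i) S"
  unfolding norm2_def L2_set_def scalar_prod_subvec[OF assms(1,1,2)]
  by (simp add: power2_eq_square)

lemma rows_carrier_mat:
  assumes "X \<in> carrier_mat n d" "S \<subseteq> {..<n}"
  shows "rows X S \<in> carrier_mat (card S) d"
proof
  show "dim_row (rows X S) = card S"
    unfolding rows_def dim_submatrix using assms card_lessThan_restrict[of S n] by simp
  show "dim_col (rows X S) = d"
    unfolding rows_def dim_submatrix using assms by simp
qed

lemma rows_mult_vec:
  assumes X: "X \<in> carrier_mat n d" and S: "S \<subseteq> {..<n}" and b: "b \<in> carrier_vec d"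
  shows "rows X S *\<^sub>v b = subvec (X *\<^sub>v b) S"
proof (rule eq_vecI)
  have R: "rows X S \<in> carrier_mat (card S) d" by (rule rows_carrier_mat[OF X S])
  have S': "S \<subseteq> {..<dim_vec (X *\<^sub>v b)}" using X S by simp
  show "dim_vec (rows X S *\<^sub>v b) = dim_vec (subvec (X *\<^sub>v b) S)"
    using R S' by simp
  fix k assume "k < dim_vec (subvec (X *\<^sub>v b) S)"
  then have k: "k < card S" using S' by simp
  have pick_k: "pick S k < n" using pick_in_set_le[OF k] S by auto
  have "row (rows X S) k = row X (pick S k)"
  proof (rule eq_vecI)
    fix j assume "j < dim_vec (row X (pick S k))"
    then have j: "j < d" using X by simp
    have "rows X S $$ (k, j) = X $$ (pick S k, pick UNIV j)" unfolding rows_def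
      by (rule submatrix_index) (use X S k j card_lessThan_restrict[OF S] in auto)
    then show "row (rows X S) k $ j = row X (pick S k) $ j"
      using R X k j pick_k by (simp add: pick_UNIV)
  qed (use R X in simp)
  then show "(rows X S *\<^sub>v b) $ k = subvec (X *\<^sub>v b) S $ k"
    using R X k pick_k S' by (simp add: subvec_index)
qed

lemma norm2_rows_mult_vec:
  assumes "X \<in> carrier_mat n d" "S \<subseteq> {..<n}" "z \<in> carrier_vec d"
  shows "norm2 (rows X S *\<^sub>v z) = L2_set (\<lambda>i. (X *\<^sub>v z) $ i) S"
proof -
  have "X *\<^sub>v z \<in> carrier_vec n" using assms(1,3) by simp
  then show ?thesis unfolding rows_mult_vec[OF assms] by (rule norm2_subvec[OF _ assms(2)])
qed

lemma scalar_prod_transpose_rows: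
  assumes X: "X \<in> carrier_mat n d" and S: "S \<subseteq> {..<n}"
    and u: "u \<in> carrier_vec n" and c: "c \<in> carrier_vec d"
  shows "(transpose_mat (rows X S) *\<^sub>v subvec u S) \<bullet> c = (\<Sum>i\<in>S. u $ i * (X *\<^sub>v c) $ i)"
proof -
  have R: "rows X S \<in> carrier_mat (card S) d" by (rule rows_carrier_mat[OF X S])
  have "S \<subseteq> {..<dim_vec u}" using u S by simp
  then have "subvec u S \<in> carrier_vec (card S)" by (rule carrier_vecI[OF dim_subvec])
  then have "(transpose_mat (rows X S) *\<^sub>v subvec u S) \<bullet> c = subvec u S \<bullet> (rows X S *\<^sub>v c)"
    by (rule transpose_vec_mult_scalar[OF R c])
  also have "\<dots> = subvec u S \<bullet> subvec (X *\<^sub>v c) S" unfolding rows_mult_vec[OF X S c] ..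
  also have "\<dots> = (\<Sum>i\<in>S. u $ i * (X *\<^sub>v c) $ i)"
    by (rule scalar_prod_subvec[OF u _ S]) (use X c in simp)
  finally show ?thesis .
qed

section \<open>Spectral norm\<close>

lemma mult_mat_vec_zero_vec [simp]: "A *\<^sub>v 0\<^sub>v (dim_col A) = 0\<^sub>v (dim_row A)"
  by (rule eq_vecI) auto

lemma norm2_normalize:
  assumes "norm2 x \<noteq> 0"
  shows "norm2 ((1 / norm2 x) \<cdot>\<^sub>v x) = 1"
  using assms norm2_nonneg[of x] by (simp add: norm2_smult)

lemma mult_vec_norm2_bounded:
  "\<exists>K\<ge>0. \<forall>v\<in>carrier_vec (dim_col A). norm2 (A *\<^sub>v v) \<le> K * norm2 v"
proof (intro exI conjI ballI)
  let ?K = "L2_set (\<lambda>i. norm2 (row A i)) {..<dim_row A}"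
  show "0 \<le> ?K" by simp
  fix v :: "real vec" assume v: "v \<in> carrier_vec (dim_col A)"
  have "norm2 (A *\<^sub>v v) = L2_set (\<lambda>i. \<bar>row A i \<bullet> v\<bar>) {..<dim_row A}"
    unfolding norm2_eq_L2_set L2_set_def by simp
  also have "\<dots> \<le> L2_set (\<lambda>i. norm2 (row A i) * norm2 v) {..<dim_row A}"
    using v by (intro L2_set_mono abs_scalar_prod_le_norm2) auto
  also have "\<dots> = ?K * norm2 v" by (simp add: L2_set_left_distrib)
  finally show "norm2 (A *\<^sub>v v) \<le> ?K * norm2 v" .
qed

lemma bdd_above_spec_norm_set:
  "bdd_above {norm2 (A *\<^sub>v v) | v. v \<in> carrier_vec (dim_col A) \<and> norm2 v \<le> 1}"
proof -
  obtain K where "K \<ge> 0" and K: "\<forall>v\<in>carrier_vec (dim_col A). norm2 (A *\<^sub>v v) \<le> K * norm2 v"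
    using mult_vec_norm2_bounded by blast
  have "norm2 (A *\<^sub>v v) \<le> K" if "v \<in> carrier_vec (dim_col A)" "norm2 v \<le> 1" for v
    using K that \<open>K \<ge> 0\<close> by (meson mult_left_le order_trans)
  then show ?thesis unfolding bdd_above_def by blast
qed

lemma spec_norm_nonneg: "0 \<le> spec_norm A"
proof -
  have "0 \<in> {norm2 (A *\<^sub>v v) | v. v \<in> carrier_vec (dim_col A) \<and> norm2 v \<le> 1}"
    by (force intro: exI[of _ "0\<^sub>v (dim_col A)"])
  then show ?thesis
    unfolding spec_norm_def by (rule cSup_upper[OF _ bdd_above_spec_norm_set])
qed

lemma norm2_mult_vec_le_spec_norm:
  assumes v: "v \<in> carrier_vec (dim_col A)"
  shows "norm2 (A *\<^sub>v v) \<le> spec_norm A * norm2 v"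
proof (cases "norm2 v = 0")
  case True
  then show ?thesis using v by (simp add: norm2_eq_0_iff)
next
  case False
  define u where "u = (1 / norm2 v) \<cdot>\<^sub>v v"
  have "norm2 (A *\<^sub>v u) \<in> {norm2 (A *\<^sub>v v) | v. v \<in> carrier_vec (dim_col A) \<and> norm2 v \<le> 1}"
    using v norm2_normalize[OF False] unfolding u_def by fastforce
  then have "norm2 (A *\<^sub>v u) \<le> spec_norm A"
    unfolding spec_norm_def by (rule cSup_upper[OF _ bdd_above_spec_norm_set])
  moreover have "A *\<^sub>v u = (1 / norm2 v) \<cdot>\<^sub>v (A *\<^sub>v v)"
    unfolding u_def by (rule mult_mat_vec[OF carrier_mat_triv v])
  ultimately show ?thesis
    using False norm2_nonneg[of v] by (simp add: norm2_smult divide_le_eq mult.commute)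
qed

section \<open>The smallest eigenvalue of a Gram matrix\<close>

lemma scalar_prod_gram:
  assumes A: "A \<in> carrier_mat m d" and z: "z \<in> carrier_vec d"
  shows "((transpose_mat A * A) *\<^sub>v z) \<bullet> z = (norm2 (A *\<^sub>v z))\<^sup>2"
proof -
  have At: "transpose_mat A \<in> carrier_mat d m" using A by simp
  have Az: "A *\<^sub>v z \<in> carrier_vec m" using A z by simp
  have "((transpose_mat A * A) *\<^sub>v z) \<bullet> z = (transpose_mat A *\<^sub>v (A *\<^sub>v z)) \<bullet> z"
    by (simp add: assoc_mult_mat_vec[OF At A z])
  also have "\<dots> = (A *\<^sub>v z) \<bullet> (A *\<^sub>v z)" by (rule transpose_vec_mult_scalar[OF A z Az])
  finally show ?thesis by (simp add: norm2_power2)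
qed

lemma discriminant_le_of_quadratic_nonneg:
  fixes a b c :: real
  assumes c: "c \<ge> 0" and nonneg: "\<And>t. 0 \<le> a + 2 * t * b + t\<^sup>2 * c"
  shows "b\<^sup>2 \<le> a * c"
proof (cases "c = 0")
  case True
  show ?thesis
  proof (rule ccontr)
    assume "\<not> ?thesis"
    then have "b \<noteq> 0" using True by auto
    have "0 \<le> a + 2 * (- (a + 1) / (2 * b)) * b + (- (a + 1) / (2 * b))\<^sup>2 * c" by (rule nonneg)
    also have "\<dots> = -1" using \<open>b \<noteq> 0\<close> True by (simp add: field_simps)
    finally show False by simp
  qed
next
  case False
  then have "c > 0" using c by simp
  have "0 \<le> a + 2 * (- b / c) * b + (- b / c)\<^sup>2 * c" by (rule nonneg)
  also have "\<dots> = a - b\<^sup>2 / c" using \<open>c > 0\<close> by (simp add: field_simps power2_eq_square)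
  finally show ?thesis using \<open>c > 0\<close> by (simp add: divide_le_eq mult.commute)
qed

lemma psd_cauchy_schwarz:
  fixes B :: "real mat"
  assumes B: "B \<in> carrier_mat d d" and sym: "transpose_mat B = B"
    and psd: "\<And>x. x \<in> carrier_vec d \<Longrightarrow> 0 \<le> x \<bullet> (B *\<^sub>v x)"
    and u: "u \<in> carrier_vec d" and z: "z \<in> carrier_vec d"
  shows "(u \<bullet> (B *\<^sub>v z))\<^sup>2 \<le> (u \<bullet> (B *\<^sub>v u)) * (z \<bullet> (B *\<^sub>v z))"
proof (rule discriminant_le_of_quadratic_nonneg)
  show "0 \<le> z \<bullet> (B *\<^sub>v z)" by (rule psd[OF z])
  have Bu: "B *\<^sub>v u \<in> carrier_vec d" and Bz: "B *\<^sub>v z \<in> carrier_vec d" using B u z by auto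
  have symm: "z \<bullet> (B *\<^sub>v u) = u \<bullet> (B *\<^sub>v z)"
    using transpose_vec_mult_scalar[OF B u z] comm_scalar_prod[OF Bz u] sym by simp
  fix t :: real
  have Bw: "B *\<^sub>v (u + t \<cdot>\<^sub>v z) = B *\<^sub>v u + t \<cdot>\<^sub>v (B *\<^sub>v z)"
    using mult_add_distrib_mat_vec[OF B u, of "t \<cdot>\<^sub>v z"] mult_mat_vec[OF B z] z by simp
  have "(u + t \<cdot>\<^sub>v z) \<bullet> (B *\<^sub>v (u + t \<cdot>\<^sub>v z))
      = u \<bullet> (B *\<^sub>v u) + t * (u \<bullet> (B *\<^sub>v z)) + t * (z \<bullet> (B *\<^sub>v u)) + t * t * (z \<bullet> (B *\<^sub>v z))"
    unfolding Bw using u z Bu Bz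
    by (simp add: add_scalar_prod_distrib[of _ d] scalar_prod_add_distrib[of _ d] algebra_simps)
  also have "\<dots> = u \<bullet> (B *\<^sub>v u) + 2 * t * (u \<bullet> (B *\<^sub>v z)) + t\<^sup>2 * (z \<bullet> (B *\<^sub>v z))"
    unfolding symm by (simp add: power2_eq_square)
  finally show "0 \<le> u \<bullet> (B *\<^sub>v u) + 2 * t * (u \<bullet> (B *\<^sub>v z)) + t\<^sup>2 * (z \<bullet> (B *\<^sub>v z))"
    using psd[of "u + t \<cdot>\<^sub>v z"] u z by simp
qed

lemma psd_norm2_mult_vec_le:
  fixes B :: "real mat"
  assumes B: "B \<in> carrier_mat d d" and sym: "transpose_mat B = B"
    and psd: "\<And>x. x \<in> carrier_vec d \<Longrightarrow> 0 \<le> x \<bullet> (B *\<^sub>v x)"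
    and z: "z \<in> carrier_vec d"
  shows "(norm2 (B *\<^sub>v z))\<^sup>2 \<le> spec_norm B * (z \<bullet> (B *\<^sub>v z))"
proof -
  define u where "u = B *\<^sub>v z"
  have u: "u \<in> carrier_vec d" unfolding u_def using B z by simp
  have "u \<bullet> (B *\<^sub>v u) \<le> norm2 u * norm2 (B *\<^sub>v u)"
    using abs_scalar_prod_le_norm2[of u "B *\<^sub>v u"] u B by simp
  also have "\<dots> \<le> norm2 u * (spec_norm B * norm2 u)"
    using norm2_mult_vec_le_spec_norm[of u B] u B by (intro mult_left_mono) simp_all
  finally have uBu: "u \<bullet> (B *\<^sub>v u) \<le> spec_norm B * (norm2 u)\<^sup>2"
    by (simp add: power2_eq_square ac_simps)
  have "(norm2 u)\<^sup>2 * (norm2 u)\<^sup>2 = (u \<bullet> (B *\<^sub>v z))\<^sup>2"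
    by (simp add: u_def norm2_power2[symmetric])
  also have "\<dots> \<le> (u \<bullet> (B *\<^sub>v u)) * (z \<bullet> (B *\<^sub>v z))"
    by (rule psd_cauchy_schwarz[OF B sym psd u z])
  also have "\<dots> \<le> (norm2 u)\<^sup>2 * (spec_norm B * (z \<bullet> (B *\<^sub>v z)))"
    using mult_right_mono[OF uBu psd[OF z]] by (simp add: ac_simps)
  finally have le: "(norm2 u)\<^sup>2 * (norm2 u)\<^sup>2 \<le> (norm2 u)\<^sup>2 * (spec_norm B * (z \<bullet> (B *\<^sub>v z)))" .
  have "(norm2 u)\<^sup>2 \<le> spec_norm B * (z \<bullet> (B *\<^sub>v z))"
  proof (cases "norm2 u = 0")
    case True
    then show ?thesis using spec_norm_nonneg[of B] psd[OF z] by simp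
  next
    case False
    then have "0 < (norm2 u)\<^sup>2" by simp
    then show ?thesis using le by (simp only: mult_le_cancel_left_pos)
  qed
  then show ?thesis unfolding u_def .
qed

lemma quadform_ge_of_left_inverse:
  fixes B C :: "real mat"
  assumes B: "B \<in> carrier_mat d d" and sym: "transpose_mat B = B"
    and psd: "\<And>x. x \<in> carrier_vec d \<Longrightarrow> 0 \<le> x \<bullet> (B *\<^sub>v x)"
    and C: "C \<in> carrier_mat d d" and CB: "C * B = 1\<^sub>m d"
    and z: "z \<in> carrier_vec d" and unit: "norm2 z = 1"
  shows "0 < (spec_norm C)\<^sup>2 * spec_norm B"
    and "1 / ((spec_norm C)\<^sup>2 * spec_norm B) \<le> z \<bullet> (B *\<^sub>v z)"
proof -
  have Bz: "B *\<^sub>v z \<in> carrier_vec d" using B z by simp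
  have "z = C *\<^sub>v (B *\<^sub>v z)" using assoc_mult_mat_vec[OF C B z] CB z by simp
  then have "1 \<le> spec_norm C * norm2 (B *\<^sub>v z)"
    using norm2_mult_vec_le_spec_norm[of "B *\<^sub>v z" C] Bz C unit by simp
  then have "1 \<le> (spec_norm C)\<^sup>2 * (norm2 (B *\<^sub>v z))\<^sup>2"
    by (metis one_le_power power_mult_distrib)
  also have "\<dots> \<le> (spec_norm C)\<^sup>2 * (spec_norm B * (z \<bullet> (B *\<^sub>v z)))"
    by (intro mult_left_mono psd_norm2_mult_vec_le[OF B sym psd z]) auto
  finally have one_le: "1 \<le> ((spec_norm C)\<^sup>2 * spec_norm B) * (z \<bullet> (B *\<^sub>v z))"
    by (simp add: ac_simps)
  moreover have "0 \<le> (spec_norm C)\<^sup>2 * spec_norm B" by (simp add: spec_norm_nonneg)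
  ultimately show pos: "0 < (spec_norm C)\<^sup>2 * spec_norm B"
    by (metis less_eq_real_def mult_zero_left not_one_le_zero)
  show "1 / ((spec_norm C)\<^sup>2 * spec_norm B) \<le> z \<bullet> (B *\<^sub>v z)"
    using one_le pos by (simp add: divide_le_eq mult.commute)
qed

definition rayleigh_inf :: "real mat \<Rightarrow> real" where
  "rayleigh_inf A = Inf {(norm2 (A *\<^sub>v z))\<^sup>2 | z. z \<in> carrier_vec (dim_col A) \<and> norm2 z = 1}"

lemma rayleigh_inf_le:
  assumes x: "x \<in> carrier_vec (dim_col A)"
  shows "rayleigh_inf A * (norm2 x)\<^sup>2 \<le> (norm2 (A *\<^sub>v x))\<^sup>2"
proof (cases "norm2 x = 0")
  case True
  then show ?thesis by simp
next
  case False
  define u where "u = (1 / norm2 x) \<cdot>\<^sub>v x"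
  have "(norm2 (A *\<^sub>v u))\<^sup>2 \<in> {(norm2 (A *\<^sub>v z))\<^sup>2 | z. z \<in> carrier_vec (dim_col A) \<and> norm2 z = 1}"
    using x norm2_normalize[OF False] unfolding u_def by fastforce
  then have "rayleigh_inf A \<le> (norm2 (A *\<^sub>v u))\<^sup>2"
    unfolding rayleigh_inf_def by (rule cInf_lower) (auto intro: bdd_belowI[of _ 0])
  also have "\<dots> = (norm2 (A *\<^sub>v x))\<^sup>2 / (norm2 x)\<^sup>2"
    unfolding u_def mult_mat_vec[OF carrier_mat_triv x] norm2_smult using False
    by (simp add: power_divide)
  finally show ?thesis using False by (simp add: le_divide_eq)
qed

lemma char_matrix_mult_vec:
  assumes "M \<in> carrier_mat d d" and "z \<in> carrier_vec d"
  shows "char_matrix M \<mu> *\<^sub>v z = M *\<^sub>v z + (- \<mu>) \<cdot>\<^sub>v z"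
  using assms unfolding char_matrix_def by (intro eq_vecI) (auto simp: algebra_simps)

lemma scalar_prod_char_matrix_gram:
  assumes A: "A \<in> carrier_mat m d" and z: "z \<in> carrier_vec d"
  shows "z \<bullet> (char_matrix (transpose_mat A * A) \<mu> *\<^sub>v z) = (norm2 (A *\<^sub>v z))\<^sup>2 - \<mu> * (norm2 z)\<^sup>2"
proof -
  let ?M = "transpose_mat A * A"
  have M: "?M \<in> carrier_mat d d" using A by simp
  show ?thesis
    unfolding char_matrix_mult_vec[OF M z]
    using z M scalar_prod_gram[OF A z] comm_scalar_prod[of "?M *\<^sub>v z" d z]
    by (simp add: scalar_prod_add_distrib[of _ d] norm2_power2)
qed

lemma transpose_char_matrix:
  assumes M: "M \<in> carrier_mat d d" and sym: "transpose_mat M = M"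
  shows "transpose_mat (char_matrix M \<mu>) = char_matrix M \<mu>"
  using M sym unfolding char_matrix_def by (intro eq_matI) (auto simp: mat_eq_iff)

text \<open>If the infimum \<open>\<mu>\<close> of the Rayleigh quotient were no eigenvalue, \<open>M - \<mu> I\<close> would be
  invertible and positive semidefinite, so its quadratic form would be bounded away from \<open>0\<close> on
  the unit sphere, contradicting the choice of \<open>\<mu>\<close>.\<close>

lemma eigenvalue_rayleigh_inf:
  assumes A: "A \<in> carrier_mat m d" and "0 < d"
  shows "eigenvalue (transpose_mat A * A) (rayleigh_inf A)"
proof (rule ccontr)
  define M \<mu> where "M = transpose_mat A * A" and "\<mu> = rayleigh_inf A"
  define B where "B = char_matrix M \<mu>"
  define Q where "Q = {(norm2 (A *\<^sub>v z))\<^sup>2 | z. z \<in> carrier_vec d \<and> norm2 z = 1}"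
  have M: "M \<in> carrier_mat d d" unfolding M_def using A by simp
  have B: "B \<in> carrier_mat d d" unfolding B_def using M by simp
  assume "\<not> eigenvalue (transpose_mat A * A) (rayleigh_inf A)"
  then have "det B \<noteq> 0" unfolding B_def M_def \<mu>_def using eigenvalue_det M M_def by blast
  then obtain C where C: "C \<in> carrier_mat d d" "C * B = 1\<^sub>m d"
    using det_non_zero_imp_unit[OF B] unfolding Units_def ring_mat_def by auto
  have quad: "z \<bullet> (B *\<^sub>v z) = (norm2 (A *\<^sub>v z))\<^sup>2 - \<mu> * (norm2 z)\<^sup>2" if "z \<in> carrier_vec d" for z
    unfolding B_def M_def by (rule scalar_prod_char_matrix_gram[OF A that])
  have psd: "0 \<le> x \<bullet> (B *\<^sub>v x)" if "x \<in> carrier_vec d" for x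
    using quad[OF that] rayleigh_inf_le[of x A] that A unfolding \<mu>_def by simp
  have "transpose_mat M = M" unfolding M_def using A by (simp add: transpose_mult[of _ d m])
  then have sym: "transpose_mat B = B" unfolding B_def by (rule transpose_char_matrix[OF M])
  define \<delta> where "\<delta> = 1 / ((spec_norm C)\<^sup>2 * spec_norm B)"
  have unit: "unit_vec d 0 \<in> carrier_vec d" "norm2 (unit_vec d 0) = 1"
    using \<open>0 < d\<close> by (simp_all add: norm2_def)
  have "0 < \<delta>" unfolding \<delta>_def
    using quadform_ge_of_left_inverse(1)[OF B sym psd C unit] by simp
  have "\<mu> + \<delta> \<le> q" if "q \<in> Q" for q
  proof -
    obtain z where z: "z \<in> carrier_vec d" "norm2 z = 1" and q: "q = (norm2 (A *\<^sub>v z))\<^sup>2"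
      using \<open>q \<in> Q\<close> unfolding Q_def by blast
    show ?thesis
      using quadform_ge_of_left_inverse(2)[OF B sym psd C z] quad[OF z(1)] z(2) q
      unfolding \<delta>_def by simp
  qed
  moreover have "Q \<noteq> {}" using unit unfolding Q_def by blast
  ultimately have "\<mu> + \<delta> \<le> Inf Q" by (intro cInf_greatest)
  moreover have "Inf Q = \<mu>" unfolding Q_def \<mu>_def rayleigh_inf_def using A by simp
  ultimately show False using \<open>0 < \<delta>\<close> by simp
qed

lemma finite_eigenvalues:
  assumes "(M :: real mat) \<in> carrier_mat d d"
  shows "finite {k. eigenvalue M k}"
proof -
  have "char_poly M \<noteq> 0" using degree_monic_char_poly[OF assms] by auto
  then show ?thesis using poly_roots_finite eigenvalue_root_char_poly[OF assms] by simp
qed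

lemma lambda_min_gram_le:
  assumes A: "A \<in> carrier_mat m d" and z: "z \<in> carrier_vec d"
  shows "lambda_min (transpose_mat A * A) * (norm2 z)\<^sup>2 \<le> (norm2 (A *\<^sub>v z))\<^sup>2"
proof (cases "d = 0")
  case True
  then show ?thesis using z by (simp add: norm2_eq_L2_set)
next
  case False
  have "transpose_mat A * A \<in> carrier_mat d d" using A by simp
  then have "lambda_min (transpose_mat A * A) \<le> rayleigh_inf A"
    unfolding lambda_min_def using eigenvalue_rayleigh_inf[OF A] False
    by (intro Min_le finite_eigenvalues) auto
  then have "lambda_min (transpose_mat A * A) * (norm2 z)\<^sup>2 \<le> rayleigh_inf A * (norm2 z)\<^sup>2"
    by (rule mult_right_mono) simp
  also have "\<dots> \<le> (norm2 (A *\<^sub>v z))\<^sup>2" using rayleigh_inf_le[of z A] A z by simp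
  finally show ?thesis .
qed

section \<open>Least squares on a set of rows\<close>

lemma right_inverse_eq_left_inverse:
  fixes M :: "real mat"
  assumes M: "M \<in> carrier_mat d d" and Mi: "Mi \<in> carrier_mat d d" and B: "B \<in> carrier_mat d d"
    and left: "Mi * M = 1\<^sub>m d" and right: "M * B = 1\<^sub>m d"
  shows "B = Mi"
proof -
  have "B = (Mi * M) * B" using left B by simp
  also have "\<dots> = Mi * (M * B)" using Mi M B by simp
  finally show ?thesis using right Mi by simp
qed

lemma pinv_eq_inverse:
  fixes M :: "real mat"
  assumes M: "M \<in> carrier_mat d d" and Mi: "Mi \<in> carrier_mat d d"
    and right: "M * Mi = 1\<^sub>m d" and left: "Mi * M = 1\<^sub>m d"
  shows "pinv M = Mi"
  unfolding pinv_def
proof (rule the_equality)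
  show "Mi \<in> carrier_mat (dim_col M) (dim_row M) \<and> M * Mi * M = M \<and> Mi * M * Mi = Mi
     \<and> transpose_mat (M * Mi) = M * Mi \<and> transpose_mat (Mi * M) = Mi * M"
    using M Mi right left by simp
  fix B assume "B \<in> carrier_mat (dim_col M) (dim_row M) \<and> M * B * M = M \<and> B * M * B = B
     \<and> transpose_mat (M * B) = M * B \<and> transpose_mat (B * M) = B * M"
  then have B: "B \<in> carrier_mat d d" and MBM: "M * B * M = M" using M by auto
  have "M * B = (M * B * M) * Mi"
    using M B Mi right assoc_mult_mat[of "M * B" d d M d Mi d] by simp
  then have "M * B = 1\<^sub>m d" using MBM right by simp
  then show "B = Mi" by (rule right_inverse_eq_left_inverse[OF M Mi B left])
qed

lemma minv_eq_inverse:
  fixes M :: "real mat"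
  assumes M: "M \<in> carrier_mat d d" and Mi: "Mi \<in> carrier_mat d d"
    and right: "M * Mi = 1\<^sub>m d" and left: "Mi * M = 1\<^sub>m d"
  shows "minv M = Mi"
  unfolding minv_def
proof (rule the_equality)
  show "inverts_mat M Mi \<and> inverts_mat Mi M" unfolding inverts_mat_def using M Mi right left by simp
  fix B assume "inverts_mat M B \<and> inverts_mat B M"
  then have MB: "M * B = 1\<^sub>m d" and BM: "B * M = 1\<^sub>m (dim_row B)"
    unfolding inverts_mat_def using M by auto
  have "B \<in> carrier_mat d d"
    using arg_cong[OF MB, of dim_col] arg_cong[OF BM, of dim_col] M by auto
  then show "B = Mi" by (rule right_inverse_eq_left_inverse[OF M Mi _ left MB])
qed

lemma rows_kernel_trivial:
  assumes X: "X \<in> carrier_mat n d" and P: "P \<subseteq> {..<n}" and S: "S \<subseteq> P"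
    and pos: "lambda_min (transpose_mat (rows X S) * rows X S) > 0"
    and z: "z \<in> carrier_vec d" and zero: "\<forall>i\<in>P. (X *\<^sub>v z) $ i = 0"
  shows "z = 0\<^sub>v d"
proof -
  have Sn: "S \<subseteq> {..<n}" using S P by auto
  have "norm2 (rows X S *\<^sub>v z) = 0"
    unfolding norm2_rows_mult_vec[OF X Sn z] using zero S by (intro L2_set_0') auto
  then have "lambda_min (transpose_mat (rows X S) * rows X S) * (norm2 z)\<^sup>2 \<le> 0"
    using lambda_min_gram_le[OF rows_carrier_mat[OF X Sn] z] by simp
  then have "norm2 z = 0" using pos by (simp add: mult_le_0_iff)
  then show ?thesis using norm2_eq_0_iff[OF z] by simp
qed

lemma gram_rows_invertible:
  assumes X: "X \<in> carrier_mat n d" and P: "P \<subseteq> {..<n}" and S: "S \<subseteq> P"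
    and pos: "lambda_min (transpose_mat (rows X S) * rows X S) > 0"
  obtains Mi where "Mi \<in> carrier_mat d d"
    and "(transpose_mat (rows X P) * rows X P) * Mi = 1\<^sub>m d"
    and "Mi * (transpose_mat (rows X P) * rows X P) = 1\<^sub>m d"
proof -
  let ?G = "transpose_mat (rows X P) * rows X P"
  have R: "rows X P \<in> carrier_mat (card P) d" by (rule rows_carrier_mat[OF X P])
  then have G: "?G \<in> carrier_mat d d" by simp
  have "z = 0\<^sub>v d" if z: "z \<in> carrier_vec d" and Gz: "?G *\<^sub>v z = 0\<^sub>v d" for z
  proof (rule rows_kernel_trivial[OF X P S pos z])
    have "(norm2 (rows X P *\<^sub>v z))\<^sup>2 = 0" using scalar_prod_gram[OF R z] Gz z by simp
    then have "L2_set (\<lambda>i. (X *\<^sub>v z) $ i) P = 0" unfolding norm2_rows_mult_vec[OF X P z] by simp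
    moreover have "finite P" using P finite_subset by blast
    ultimately show "\<forall>i\<in>P. (X *\<^sub>v z) $ i = 0" by (simp add: L2_set_eq_0_iff)
  qed
  then have "det ?G \<noteq> 0" using det_0_iff_vec_prod_zero[OF G] by blast
  then have "?G \<in> Units (ring_mat TYPE(real) d ())" by (rule det_non_zero_imp_unit[OF G])
  then show ?thesis using that unfolding Units_def ring_mat_def by auto
qed

definition normal_equations :: "real mat \<Rightarrow> real vec \<Rightarrow> nat set \<Rightarrow> real vec \<Rightarrow> bool" where
  "normal_equations X Y S b \<longleftrightarrow>
     (\<forall>c \<in> carrier_vec (dim_col X). (\<Sum>i\<in>S. (Y - X *\<^sub>v b) $ i * (X *\<^sub>v c) $ i) = 0)"

lemma normal_equations_gram_inverse:
  assumes X: "X \<in> carrier_mat n d" and S: "S \<subseteq> {..<n}" and Y: "Y \<in> carrier_vec n"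
    and Mi: "Mi \<in> carrier_mat d d" and inv: "(transpose_mat (rows X S) * rows X S) * Mi = 1\<^sub>m d"
  defines "b \<equiv> Mi *\<^sub>v (transpose_mat (rows X S) *\<^sub>v subvec Y S)"
  shows "b \<in> carrier_vec d" and "normal_equations X Y S b"
proof -
  define A where "A = rows X S"
  define g where "g = transpose_mat A *\<^sub>v subvec Y S"
  have A: "A \<in> carrier_mat (card S) d" unfolding A_def by (rule rows_carrier_mat[OF X S])
  have At: "transpose_mat A \<in> carrier_mat d (card S)" using A by simp
  have "S \<subseteq> {..<dim_vec Y}" using S Y by simp
  then have YS: "subvec Y S \<in> carrier_vec (card S)" by (rule carrier_vecI[OF dim_subvec])
  have g: "g \<in> carrier_vec d" unfolding g_def using At YS by simp
  show b: "b \<in> carrier_vec d" unfolding b_def using Mi At YS by (simp add: A_def)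
  have AtA: "transpose_mat A * A \<in> carrier_mat d d" using A by simp
  have "(transpose_mat A * A) *\<^sub>v b = ((transpose_mat A * A) * Mi) *\<^sub>v g"
    unfolding b_def g_def[symmetric] A_def[symmetric]
    by (rule assoc_mult_mat_vec[OF AtA Mi g, symmetric])
  also have "\<dots> = g" using inv g unfolding A_def by simp
  finally have gram_b: "transpose_mat A *\<^sub>v (A *\<^sub>v b) = g"
    using assoc_mult_mat_vec[OF At A b] by simp
  have Xb: "X *\<^sub>v b \<in> carrier_vec n" using X b by simp
  show "normal_equations X Y S b" unfolding normal_equations_def
  proof
    fix c :: "real vec" assume "c \<in> carrier_vec (dim_col X)"
    then have c: "c \<in> carrier_vec d" using X by simp
    have "subvec (Y - X *\<^sub>v b) S = subvec Y S - A *\<^sub>v b"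
      unfolding A_def rows_mult_vec[OF X S b] using subvec_minus[OF Y Xb S] ..
    then have "transpose_mat A *\<^sub>v subvec (Y - X *\<^sub>v b) S = 0\<^sub>v d"
      using gram_b g At YS A b unfolding g_def by (simp add: mult_minus_distrib_mat_vec)
    then show "(\<Sum>i\<in>S. (Y - X *\<^sub>v b) $ i * (X *\<^sub>v c) $ i) = 0"
      using scalar_prod_transpose_rows[OF X S _ c, of "Y - X *\<^sub>v b"] Y Xb c
      unfolding A_def by simp
  qed
qed

lemma ols_normal_equations:
  assumes X: "X \<in> carrier_mat n d" and P: "P \<subseteq> {..<n}" and Y: "Y \<in> carrier_vec n"
    and S: "S \<subseteq> P" and pos: "lambda_min (transpose_mat (rows X S) * rows X S) > 0"
  shows "ols X Y P \<in> carrier_vec d" and "normal_equations X Y P (ols X Y P)"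
proof -
  obtain Mi where Mi: "Mi \<in> carrier_mat d d"
    and right: "(transpose_mat (rows X P) * rows X P) * Mi = 1\<^sub>m d"
    and left: "Mi * (transpose_mat (rows X P) * rows X P) = 1\<^sub>m d"
    using gram_rows_invertible[OF X P S pos] by blast
  have "transpose_mat (rows X P) * rows X P \<in> carrier_mat d d"
    using rows_carrier_mat[OF X P] by simp
  then have "ols X Y P = Mi *\<^sub>v (transpose_mat (rows X P) *\<^sub>v subvec Y P)"
    unfolding ols_def using pinv_eq_inverse[OF _ Mi right left] by simp
  then show "ols X Y P \<in> carrier_vec d" and "normal_equations X Y P (ols X Y P)"
    using normal_equations_gram_inverse[OF X P Y Mi right] by simp_all
qed

lemma minv_normal_equations:
  assumes X: "X \<in> carrier_mat n d" and S: "S \<subseteq> {..<n}" and Y: "Y \<in> carrier_vec n"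
    and pos: "lambda_min (transpose_mat (rows X S) * rows X S) > 0"
  defines "w \<equiv> minv (transpose_mat (rows X S) * rows X S)
    *\<^sub>v (transpose_mat (rows X S) *\<^sub>v subvec Y S)"
  shows "w \<in> carrier_vec d" and "normal_equations X Y S w"
proof -
  obtain Mi where Mi: "Mi \<in> carrier_mat d d"
    and right: "(transpose_mat (rows X S) * rows X S) * Mi = 1\<^sub>m d"
    and left: "Mi * (transpose_mat (rows X S) * rows X S) = 1\<^sub>m d"
    using gram_rows_invertible[OF X S order.refl pos] by blast
  have "transpose_mat (rows X S) * rows X S \<in> carrier_mat d d"
    using rows_carrier_mat[OF X S] by simp
  then have "w = Mi *\<^sub>v (transpose_mat (rows X S) *\<^sub>v subvec Y S)"
    unfolding w_def using minv_eq_inverse[OF _ Mi right left] by simp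
  then show "w \<in> carrier_vec d" and "normal_equations X Y S w"
    using normal_equations_gram_inverse[OF X S Y Mi right] by simp_all
qed

lemma normal_equations_subset:
  assumes normal: "normal_equations X Y P b" and "finite P" and "S \<subseteq> P"
    and zero: "\<forall>i\<in>P - S. (Y - X *\<^sub>v b) $ i = 0"
  shows "normal_equations X Y S b"
  unfolding normal_equations_def
proof
  fix c :: "real vec" assume "c \<in> carrier_vec (dim_col X)"
  then have "(\<Sum>i\<in>P. (Y - X *\<^sub>v b) $ i * (X *\<^sub>v c) $ i) = 0"
    using normal unfolding normal_equations_def by blast
  moreover have "(\<Sum>i\<in>P. (Y - X *\<^sub>v b) $ i * (X *\<^sub>v c) $ i)
      = (\<Sum>i\<in>P - S. (Y - X *\<^sub>v b) $ i * (X *\<^sub>v c) $ i) + (\<Sum>i\<in>S. (Y - X *\<^sub>v b) $ i * (X *\<^sub>v c) $ i)"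
    using assms(3,2) by (rule sum.subset_diff)
  ultimately show "(\<Sum>i\<in>S. (Y - X *\<^sub>v b) $ i * (X *\<^sub>v c) $ i) = 0" using zero by simp
qed

lemma least_squares_pythagoras:
  assumes X: "X \<in> carrier_mat n d" and P: "P \<subseteq> {..<n}" and Y: "Y \<in> carrier_vec n"
    and b_hat: "b_hat \<in> carrier_vec d" and b: "b \<in> carrier_vec d"
    and normal: "normal_equations X Y P b_hat"
  shows "(\<Sum>i\<in>P. ((Y - X *\<^sub>v b) $ i)\<^sup>2)
       = (\<Sum>i\<in>P. ((Y - X *\<^sub>v b_hat) $ i)\<^sup>2) + (\<Sum>i\<in>P. ((X *\<^sub>v (b_hat - b)) $ i)\<^sup>2)"
proof -
  define r e where "r i = (Y - X *\<^sub>v b_hat) $ i" and "e i = (X *\<^sub>v (b_hat - b)) $ i" for i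
  have "(\<Sum>i\<in>P. r i * e i) = 0"
    using normal b_hat b X unfolding normal_equations_def r_def e_def by simp
  moreover have "(Y - X *\<^sub>v b) $ i = r i + e i" if "i \<in> P" for i
    using that P X Y b b_hat unfolding r_def e_def by (auto simp: mult_minus_distrib_mat_vec)
  then have "(\<Sum>i\<in>P. ((Y - X *\<^sub>v b) $ i)\<^sup>2) = (\<Sum>i\<in>P. (r i)\<^sup>2 + 2 * (r i * e i) + (e i)\<^sup>2)"
    by (intro sum.cong) (simp_all add: power2_sum)
  ultimately show ?thesis unfolding r_def e_def
    by (simp add: sum.distrib sum_distrib_left[symmetric])
qed

lemma normal_equations_diff:
  assumes X: "X \<in> carrier_mat n d" and S: "S \<subseteq> {..<n}"
    and Y: "Y \<in> carrier_vec n" and Y': "Y' \<in> carrier_vec n"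
    and b: "b \<in> carrier_vec d" and b': "b' \<in> carrier_vec d"
    and normal: "normal_equations X Y S b" and normal': "normal_equations X Y' S b'"
  shows "normal_equations X (Y - Y') S (b - b')"
  unfolding normal_equations_def
proof
  fix c :: "real vec" assume c: "c \<in> carrier_vec (dim_col X)"
  have "(Y - Y' - X *\<^sub>v (b - b')) $ i = (Y - X *\<^sub>v b) $ i - (Y' - X *\<^sub>v b') $ i" if "i \<in> S" for i
    using that S X Y Y' b b' by (auto simp: mult_minus_distrib_mat_vec)
  then have "(\<Sum>i\<in>S. (Y - Y' - X *\<^sub>v (b - b')) $ i * (X *\<^sub>v c) $ i)
      = (\<Sum>i\<in>S. (Y - X *\<^sub>v b) $ i * (X *\<^sub>v c) $ i) - (\<Sum>i\<in>S. (Y' - X *\<^sub>v b') $ i * (X *\<^sub>v c) $ i)"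
    by (simp add: left_diff_distrib sum_subtractf)
  then show "(\<Sum>i\<in>S. (Y - Y' - X *\<^sub>v (b - b')) $ i * (X *\<^sub>v c) $ i) = 0"
    using normal normal' c unfolding normal_equations_def by simp
qed

lemma normal_equations_exact:
  assumes "X \<in> carrier_mat n d" "S \<subseteq> {..<n}" "\<beta> \<in> carrier_vec d"
  shows "normal_equations X (X *\<^sub>v \<beta>) S \<beta>"
  using assms unfolding normal_equations_def by (auto intro!: sum.neutral)

lemma normal_equations_fit_le:
  assumes X: "X \<in> carrier_mat n d" and P: "P \<subseteq> {..<n}" and Y: "Y \<in> carrier_vec n"
    and b: "b \<in> carrier_vec d" and normal: "normal_equations X Y P b"
  shows "L2_set (\<lambda>i. (X *\<^sub>v b) $ i) P \<le> L2_set (\<lambda>i. Y $ i) P"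
proof -
  have "(\<Sum>i\<in>P. ((Y - X *\<^sub>v 0\<^sub>v d) $ i)\<^sup>2)
      = (\<Sum>i\<in>P. ((Y - X *\<^sub>v b) $ i)\<^sup>2) + (\<Sum>i\<in>P. ((X *\<^sub>v (b - 0\<^sub>v d)) $ i)\<^sup>2)"
    by (rule least_squares_pythagoras[OF X P Y b _ normal]) simp
  moreover have "(Y - X *\<^sub>v 0\<^sub>v d) $ i = Y $ i" and "b - 0\<^sub>v d = b" if "i \<in> P" for i
    using that P X Y b by auto
  ultimately have "(\<Sum>i\<in>P. ((X *\<^sub>v b) $ i)\<^sup>2) \<le> (\<Sum>i\<in>P. (Y $ i)\<^sup>2)"
    using b by (simp add: sum_nonneg)
  then show ?thesis unfolding L2_set_def by (rule real_sqrt_le_mono)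
qed

section \<open>Error bound on a set keeping the smallest residuals\<close>

definition keeps_smallest :: "nat \<Rightarrow> (nat \<Rightarrow> real) \<Rightarrow> nat set \<Rightarrow> bool" where
  "keeps_smallest n f S \<longleftrightarrow> (\<forall>i\<in>S. \<forall>j<n. j \<notin> S \<longrightarrow> \<bar>f i\<bar> \<le> \<bar>f j\<bar>)"

lemma sum_power2_le_of_keeps_smallest:
  assumes "keeps_smallest n f S" and "A \<subseteq> S" and "B \<subseteq> {..<n} - S" and "card A \<le> card B"
  shows "(\<Sum>i\<in>A. (f i)\<^sup>2) \<le> (\<Sum>j\<in>B. (f j)\<^sup>2)"
  using assms finite_subset[of B "{..<n}"] unfolding keeps_smallest_def
  by (intro sum_power2_le_of_abs_le) auto

lemma sum_power2_le_of_keeps_smallest_card_eq: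
  assumes small: "keeps_smallest n f S" and S: "S \<subseteq> {..<n}" and P: "P \<subseteq> {..<n}"
    and card: "card S = card P"
  shows "(\<Sum>i\<in>S. (f i)\<^sup>2) \<le> (\<Sum>i\<in>P. (f i)\<^sup>2)"
proof -
  have fin: "finite S" "finite P" using S P finite_subset by blast+
  have "card (S - P) = card (P - S)"
    using card fin by (simp add: card_Diff_subset_Int Int_commute)
  then have "(\<Sum>i\<in>S - P. (f i)\<^sup>2) \<le> (\<Sum>i\<in>P - S. (f i)\<^sup>2)"
    using P by (intro sum_power2_le_of_keeps_smallest[OF small]) auto
  moreover have "(\<Sum>i\<in>S. (f i)\<^sup>2) = (\<Sum>i\<in>S \<inter> P. (f i)\<^sup>2) + (\<Sum>i\<in>S - P. (f i)\<^sup>2)"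
    and "(\<Sum>i\<in>P. (f i)\<^sup>2) = (\<Sum>i\<in>P \<inter> S. (f i)\<^sup>2) + (\<Sum>i\<in>P - S. (f i)\<^sup>2)"
    using fin by (simp_all add: sum.Int_Diff)
  ultimately show ?thesis by (simp add: Int_commute)
qed

lemma outlier_fit_le:
  assumes X: "X \<in> carrier_mat n d" and \<beta>: "\<beta> \<in> carrier_vec d"
    and \<epsilon>: "\<epsilon> \<in> carrier_vec n" and out: "out \<in> carrier_vec n"
    and out_G: "\<forall>i<n. i \<notin> G \<longrightarrow> out $ i = 0" and Y: "Y = X *\<^sub>v \<beta> + \<epsilon> + out"
    and S: "S \<subseteq> {..<n}" and b: "b \<in> carrier_vec d" and w: "w \<in> carrier_vec d"
    and normal_Y: "normal_equations X Y S b" and normal_\<epsilon>: "normal_equations X \<epsilon> S w"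
  shows "norm2 (rows X S *\<^sub>v (b - w - \<beta>)) \<le> L2_set (\<lambda>i. out $ i) (S \<inter> G)"
proof -
  have Y_carrier: "Y \<in> carrier_vec n" using Y X \<beta> \<epsilon> out by simp
  have "normal_equations X (Y - \<epsilon> - X *\<^sub>v \<beta>) S (b - w - \<beta>)"
    using X S Y_carrier \<epsilon> b w \<beta>
    by (intro normal_equations_diff[of X n d] normal_equations_exact normal_Y normal_\<epsilon>) auto
  moreover have "Y - \<epsilon> - X *\<^sub>v \<beta> = out"
    unfolding Y using X \<beta> \<epsilon> out by (intro eq_vecI) auto
  ultimately have "L2_set (\<lambda>i. (X *\<^sub>v (b - w - \<beta>)) $ i) S \<le> L2_set (\<lambda>i. out $ i) S"
    using X S out b w \<beta> by (intro normal_equations_fit_le[of X n d]) auto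
  also have "L2_set (\<lambda>i. out $ i) S = L2_set (\<lambda>i. out $ i) (S \<inter> G)"
    unfolding L2_set_def using S out_G finite_subset[OF S]
    by (intro arg_cong[where f = sqrt] sum.mono_neutral_right) auto
  finally show ?thesis using X S b w \<beta> by (simp add: norm2_rows_mult_vec)
qed

lemma outlier_residuals_le:
  assumes X: "X \<in> carrier_mat n d" and \<beta>: "\<beta> \<in> carrier_vec d"
    and \<epsilon>: "\<epsilon> \<in> carrier_vec n" and out: "out \<in> carrier_vec n"
    and G: "G \<subseteq> {..<n}" and out_G: "\<forall>i<n. i \<notin> G \<longrightarrow> out $ i = 0"
    and Y: "Y = X *\<^sub>v \<beta> + \<epsilon> + out"
    and S: "S \<subseteq> {..<n}" and card: "card G \<le> n - card S"
    and b: "b \<in> carrier_vec d" and small: "keeps_smallest n (\<lambda>i. (Y - X *\<^sub>v b) $ i) S"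
  shows "L2_set (\<lambda>i. out $ i) (S \<inter> G)
    \<le> sqrt 2 * (L2_set (\<lambda>i. \<epsilon> $ i) (Vset n G S) + L2_set (\<lambda>i. (X *\<^sub>v (b - \<beta>)) $ i) (Vset n G S))"
proof -
  define r x where "r i = (Y - X *\<^sub>v b) $ i" and "x i = (X *\<^sub>v (b - \<beta>)) $ i" for i
  define C where "C = {..<n} - G - S"
  have r: "r i = \<epsilon> $ i + out $ i - x i" if "i < n" for i
    using that X \<beta> \<epsilon> out b unfolding r_def x_def Y by (simp add: mult_minus_distrib_mat_vec)
  have fin: "finite (S \<inter> G)" "finite C" using S unfolding C_def by (auto intro: finite_subset)
  have V: "Vset n G S = (S \<inter> G) \<union> C" and disj: "(S \<inter> G) \<inter> C = {}"
    unfolding Vset_def C_def using S by auto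
  have "L2_set (\<lambda>i. out $ i) (S \<inter> G) = L2_set (\<lambda>i. r i - \<epsilon> $ i + x i) (S \<inter> G)"
    using S by (intro L2_set_cong) (auto simp: r)
  also have "\<dots> \<le> L2_set r (S \<inter> G) + L2_set (\<lambda>i. \<epsilon> $ i) (S \<inter> G) + L2_set x (S \<inter> G)"
    using L2_set_triangle_ineq[of "\<lambda>i. r i - \<epsilon> $ i" x] L2_set_diff_le[of r "\<lambda>i. \<epsilon> $ i"]
    by (smt (verit))
  also have "L2_set r (S \<inter> G) \<le> L2_set r C"
    unfolding L2_set_def using small card_Int_le_card_Diff[OF S G card]
    by (intro real_sqrt_le_mono sum_power2_le_of_keeps_smallest) (auto simp: C_def r_def)
  also have "L2_set r C = L2_set (\<lambda>i. \<epsilon> $ i - x i) C"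
    using out_G by (intro L2_set_cong) (auto simp: C_def r)
  also have "\<dots> \<le> L2_set (\<lambda>i. \<epsilon> $ i) C + L2_set x C" by (rule L2_set_diff_le)
  finally show ?thesis
    using L2_set_le_sqrt2_union[OF fin disj, of "\<lambda>i. \<epsilon> $ i"]
      L2_set_le_sqrt2_union[OF fin disj, of x]
    unfolding V x_def by (simp add: distrib_left)
qed

lemma le_of_self_bound:
  fixes l s \<eta> E w z :: real
  assumes l: "0 < l" and s: "s \<le> \<eta> * l" and \<eta>: "sqrt 2 * \<eta> < 1" and z: "0 \<le> z"
    and bound: "l * z \<le> sqrt 2 * (E + s * (w + z))"
  shows "z \<le> (sqrt 2 * s * w + sqrt 2 * E) / (l * (1 - sqrt 2 * \<eta>))"
proof -
  have "sqrt 2 * s * z \<le> sqrt 2 * (\<eta> * l) * z"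
    using s z by (intro mult_right_mono mult_left_mono) simp_all
  then have "l * (1 - sqrt 2 * \<eta>) * z \<le> sqrt 2 * s * w + sqrt 2 * E"
    using bound by (simp add: algebra_simps)
  moreover have "0 < l * (1 - sqrt 2 * \<eta>)" using l \<eta> by simp
  ultimately show ?thesis by (simp add: le_divide_eq mult.commute)
qed

lemma ols_error_bound:
  fixes \<eta> :: real
  assumes X: "X \<in> carrier_mat n d" and \<beta>: "\<beta> \<in> carrier_vec d"
    and \<epsilon>: "\<epsilon> \<in> carrier_vec n" and out: "out \<in> carrier_vec n"
    and G: "G \<subseteq> {..<n}" and out_G: "\<forall>i<n. i \<notin> G \<longrightarrow> out $ i = 0"
    and Y: "Y = X *\<^sub>v \<beta> + \<epsilon> + out"
    and S: "S \<subseteq> {..<n}" and card: "card G \<le> n - card S"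
    and pos: "lambda_min (transpose_mat (rows X S) * rows X S) > 0"
    and b: "b \<in> carrier_vec d" and normal: "normal_equations X Y S b"
    and small: "keeps_smallest n (\<lambda>i. (Y - X *\<^sub>v b) $ i) S"
    and eta: "spec_norm (rows X (Vset n G S))
      \<le> \<eta> * sqrt (lambda_min (transpose_mat (rows X S) * rows X S))"
    and eta_lt: "sqrt 2 * \<eta> < 1"
  defines "w \<equiv> minv (transpose_mat (rows X S) * rows X S)
    *\<^sub>v (transpose_mat (rows X S) *\<^sub>v subvec \<epsilon> S)"
  shows "norm2 (b - \<beta>) \<le> norm2 w
    + (sqrt 2 * spec_norm (rows X (Vset n G S)) * norm2 w + sqrt 2 * norm2 (subvec \<epsilon> (Vset n G S)))
      / (sqrt (lambda_min (transpose_mat (rows X S) * rows X S)) * (1 - sqrt 2 * \<eta>))"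
proof -
  define l where "l = sqrt (lambda_min (transpose_mat (rows X S) * rows X S))"
  define V where "V = Vset n G S"
  define s E where "s = spec_norm (rows X V)" and "E = norm2 (subvec \<epsilon> V)"
  define z where "z = b - w - \<beta>"
  have w: "w \<in> carrier_vec d" and normal_\<epsilon>: "normal_equations X \<epsilon> S w"
    using minv_normal_equations[OF X S \<epsilon> pos] unfolding w_def by simp_all
  have z: "z \<in> carrier_vec d" unfolding z_def using b w \<beta> by simp
  have V_sub: "V \<subseteq> {..<n}" unfolding V_def Vset_def using S by auto
  have b_minus_\<beta>: "b - \<beta> = w + z" unfolding z_def using b w \<beta> by (intro eq_vecI) auto
  have "l * norm2 z \<le> norm2 (rows X S *\<^sub>v z)"
    using real_sqrt_le_mono[OF lambda_min_gram_le[OF rows_carrier_mat[OF X S] z]] pos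
    unfolding l_def by (simp add: real_sqrt_mult)
  also have "\<dots> \<le> L2_set (\<lambda>i. out $ i) (S \<inter> G)"
    unfolding z_def by (rule outlier_fit_le[OF X \<beta> \<epsilon> out out_G Y S b w normal normal_\<epsilon>])
  also have "\<dots> \<le> sqrt 2 * (E + s * norm2 (b - \<beta>))"
  proof -
    have "L2_set (\<lambda>i. (X *\<^sub>v (b - \<beta>)) $ i) V = norm2 (rows X V *\<^sub>v (b - \<beta>))"
      using X V_sub b \<beta> by (simp add: norm2_rows_mult_vec)
    also have "\<dots> \<le> s * norm2 (b - \<beta>)"
      unfolding s_def using rows_carrier_mat[OF X V_sub] b \<beta>
      by (intro norm2_mult_vec_le_spec_norm) simp
    finally have "L2_set (\<lambda>i. (X *\<^sub>v (b - \<beta>)) $ i) V \<le> s * norm2 (b - \<beta>)" .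
    moreover have "E = L2_set (\<lambda>i. \<epsilon> $ i) V" unfolding E_def by (rule norm2_subvec[OF \<epsilon> V_sub])
    ultimately have "sqrt 2 * (L2_set (\<lambda>i. \<epsilon> $ i) V + L2_set (\<lambda>i. (X *\<^sub>v (b - \<beta>)) $ i) V)
        \<le> sqrt 2 * (E + s * norm2 (b - \<beta>))"
      by (simp add: mult_left_mono)
    then show ?thesis
      using outlier_residuals_le[OF X \<beta> \<epsilon> out G out_G Y S card b small] unfolding V_def by linarith
  qed
  also have "\<dots> \<le> sqrt 2 * (E + s * (norm2 w + norm2 z))"
    unfolding b_minus_\<beta> using norm2_add_le[OF w z] spec_norm_nonneg[of "rows X V"]
    by (simp add: s_def mult_left_mono)
  finally have "l * norm2 z \<le> sqrt 2 * (E + s * (norm2 w + norm2 z))" .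
  moreover have "0 < l" unfolding l_def using pos by simp
  moreover have "s \<le> \<eta> * l" using eta unfolding s_def V_def l_def .
  ultimately have "norm2 z \<le> (sqrt 2 * s * norm2 w + sqrt 2 * E) / (l * (1 - sqrt 2 * \<eta>))"
    using le_of_self_bound eta_lt by simp
  then show ?thesis
    using norm2_add_le[OF w z] unfolding b_minus_\<beta> s_def E_def V_def l_def by linarith
qed

lemma spec_norm_le_eta:
  assumes S: "S \<subseteq> {..<n}" and card: "card S = a"
    and pos: "lambda_min (transpose_mat (rows X S) * rows X S) > 0"
  shows "spec_norm (rows X (Vset n G S))
    \<le> eta X n G a * sqrt (lambda_min (transpose_mat (rows X S) * rows X S))"
proof -
  have "finite {S. S \<subseteq> {..<n} \<and> card S = a}" by (rule finite_subset[of _ "Pow {..<n}"]) auto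
  then have "spec_norm (rows X (Vset n G S))
      / sqrt (lambda_min (transpose_mat (rows X S) * rows X S)) \<le> eta X n G a"
    unfolding eta_def using S card by (intro Max_ge) auto
  then show ?thesis using pos by (simp add: divide_le_eq)
qed

section \<open>The Torrent iteration\<close>

locale torrent_run =
  fixes n d a :: nat and X :: "real mat" and Y :: "real vec"
    and ht :: "(nat \<Rightarrow> real) \<Rightarrow> nat \<Rightarrow> nat set"
  assumes X: "X \<in> carrier_mat n d" and Y: "Y \<in> carrier_vec n"
    and ht: "is_HT n ht" and a_le_n: "a \<le> n"
    and gram_pos: "\<And>S. S \<subseteq> {..<n} \<Longrightarrow> card S = a \<Longrightarrow>
      lambda_min (transpose_mat (rows X S) * rows X S) > 0"
begin

text \<open>\<open>fit t\<close> is the paper's \<open>\<beta>\<^sup>t\<^sup>+\<^sup>1\<close>, the OLS fit on \<open>S\<^sub>t\<close>; \<open>err t\<close> is the residual norm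
  after iteration \<open>t\<close>, with \<open>err 0 = \<parallel>Y\<parallel>\<close> replacing the initial \<open>\<infinity>\<close>.\<close>

abbreviation sel :: "nat \<Rightarrow> nat set" where "sel t \<equiv> tor_S ht X Y a t"
abbreviation fit :: "nat \<Rightarrow> real vec" where "fit t \<equiv> ols X Y (sel t)"
abbreviation err :: "nat \<Rightarrow> real" where "err t \<equiv> tor_err ht X Y a t"

declare tor_S.simps(2) [simp del]

lemma sel_Suc_eq: "sel (Suc t) = ht (\<lambda>i. \<bar>(Y - X *\<^sub>v fit t) $ i\<bar>) a"
  by (rule tor_S.simps(2))

lemma sel_0: "sel 0 = {..<n}"
  using Y by simp

lemma
  shows sel_Suc_subset: "sel (Suc t) \<subseteq> {..<n}" and card_sel_Suc: "card (sel (Suc t)) = a"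
    and sel_Suc_keeps_smallest: "keeps_smallest n (\<lambda>i. (Y - X *\<^sub>v fit t) $ i) (sel (Suc t))"
proof -
  let ?v = "\<lambda>i. \<bar>(Y - X *\<^sub>v fit t) $ i\<bar>"
  have "ht ?v a \<subseteq> {..<n} \<and> card (ht ?v a) = a \<and> (\<forall>i\<in>ht ?v a. \<forall>j<n. j \<notin> ht ?v a \<longrightarrow> ?v i \<le> ?v j)"
    using ht a_le_n unfolding is_HT_def by blast
  then show "sel (Suc t) \<subseteq> {..<n}" and "card (sel (Suc t)) = a"
    and "keeps_smallest n (\<lambda>i. (Y - X *\<^sub>v fit t) $ i) (sel (Suc t))"
    unfolding keeps_smallest_def sel_Suc_eq by simp_all
qed

lemma sel_subset: "sel t \<subseteq> {..<n}"
  by (cases t) (simp_all only: sel_0 sel_Suc_subset order.refl)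

lemma
  shows fit_carrier: "fit t \<in> carrier_vec d"
    and fit_normal_equations: "normal_equations X Y (sel t) (fit t)"
proof -
  obtain S where "S \<subseteq> sel t" "card S = a"
  proof (cases t)
    case 0
    then show ?thesis using that[of "{..<a}"] a_le_n Y by simp
  next
    case (Suc t')
    then show ?thesis using that card_sel_Suc by blast
  qed
  moreover have "S \<subseteq> {..<n}" using calculation(1) sel_subset by blast
  ultimately show "fit t \<in> carrier_vec d" and "normal_equations X Y (sel t) (fit t)"
    using ols_normal_equations[OF X sel_subset Y] gram_pos by blast+
qed

lemma err_0: "err 0 = L2_set (\<lambda>i. Y $ i) {..<n}"
  using Y by (simp add: tor_err_def norm2_eq_L2_set)

lemma err_Suc: "err (Suc t) = L2_set (\<lambda>i. (Y - X *\<^sub>v fit t) $ i) (sel (Suc t))"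
proof -
  have S: "sel (Suc t) \<subseteq> {..<n}" by (rule sel_Suc_subset)
  have Xfit: "X *\<^sub>v fit t \<in> carrier_vec n" using X fit_carrier by simp
  have "subvec Y (sel (Suc t)) - rows X (sel (Suc t)) *\<^sub>v fit t
      = subvec (Y - X *\<^sub>v fit t) (sel (Suc t))"
    unfolding rows_mult_vec[OF X S fit_carrier] by (rule subvec_minus[OF Y Xfit S])
  moreover have "norm2 (subvec (Y - X *\<^sub>v fit t) (sel (Suc t)))
      = L2_set (\<lambda>i. (Y - X *\<^sub>v fit t) $ i) (sel (Suc t))"
    by (rule norm2_subvec[OF _ S]) (use Y Xfit in simp)
  ultimately show ?thesis unfolding tor_err_def tor_beta_def by simp
qed

lemma torrent_halts:
  obtains t0 where "tor_T ht X Y a = Suc t0" and "\<not> err (Suc t0) < err t0"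
proof -
  have "\<exists>t\<ge>1. \<not> err t < err (t - 1)"
  proof (rule ccontr)
    assume "\<not> ?thesis"
    then have decreasing: "\<forall>t\<ge>1. err t < err (t - 1)" by simp
    have "- err t < - err (Suc t)" for t
      using decreasing[rule_format, of "Suc t"] by simp
    then have "strict_mono (\<lambda>t. - err t)" by (simp add: strict_mono_Suc_iff)
    then have inj_err: "inj (\<lambda>t. - err t)" by (rule strict_mono_imp_inj_on)
    have "inj sel"
    proof (rule injI)
      fix i j assume "sel i = sel j"
      then have "- err (Suc i) = - err (Suc j)"
        unfolding tor_err_def tor_beta_def sel_Suc_eq by simp
      then have "Suc i = Suc j" by (rule injD[OF inj_err])
      then show "i = j" by simp
    qed
    moreover have "range sel \<subseteq> Pow {..<n}" using sel_subset by blast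
    then have "finite (range sel)" by (rule finite_subset) simp
    ultimately have "finite (UNIV :: nat set)" using finite_imageD by blast
    then show False by simp
  qed
  then have "tor_T ht X Y a \<ge> 1 \<and> \<not> err (tor_T ht X Y a) < err (tor_T ht X Y a - 1)"
    unfolding tor_T_def by (rule LeastI_ex)
  then have "tor_T ht X Y a = Suc (tor_T ht X Y a - 1)"
    and "\<not> err (Suc (tor_T ht X Y a - 1)) < err (tor_T ht X Y a - 1)"
    by simp_all
  then show ?thesis by (rule that)
qed

lemma halt_first_normal_equations:
  assumes "\<not> err (Suc 0) < err 0"
  shows "normal_equations X Y (sel (Suc 0)) (fit 0)"
proof (rule normal_equations_subset[OF fit_normal_equations])
  define R where "R i = (Y - X *\<^sub>v fit 0) $ i" for i
  have "(\<Sum>i<n. (R i)\<^sup>2) \<le> (\<Sum>i<n. (Y $ i)\<^sup>2)"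
    using least_squares_pythagoras[OF X sel_subset Y fit_carrier _ fit_normal_equations, of "0\<^sub>v d" 0]
      X Y
    unfolding R_def sel_0 by (simp add: sum_nonneg)
  also have "\<dots> \<le> (\<Sum>i\<in>sel (Suc 0). (R i)\<^sup>2)"
    using assms unfolding err_0 err_Suc R_def L2_set_def by (simp add: sum_nonneg)
  finally have "(\<Sum>i\<in>{..<n} - sel (Suc 0). (R i)\<^sup>2) \<le> 0"
    using sum.subset_diff[OF sel_Suc_subset[of 0] finite_lessThan, of "\<lambda>i. (R i)\<^sup>2"] by simp
  then show "\<forall>i\<in>sel 0 - sel (Suc 0). (Y - X *\<^sub>v fit 0) $ i = 0"
    unfolding sel_0 R_def by (intro sum_power2_le_0_imp_zero) simp_all
qed (use Y sel_Suc_subset in simp_all)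

lemma halt_later_sel_eq:
  assumes "\<not> err (Suc (Suc t)) < err (Suc t)"
  shows "sel (Suc (Suc t)) = sel (Suc t)"
proof -
  define R where "R i = (Y - X *\<^sub>v fit (Suc t)) $ i" for i
  define D where "D i = (X *\<^sub>v (fit (Suc t) - fit t)) $ i" for i
  have "(\<Sum>i\<in>sel (Suc t). ((Y - X *\<^sub>v fit t) $ i)\<^sup>2) \<le> (\<Sum>i\<in>sel (Suc (Suc t)). (R i)\<^sup>2)"
    using assms unfolding err_Suc R_def L2_set_def by (simp add: sum_nonneg)
  also have "\<dots> \<le> (\<Sum>i\<in>sel (Suc t). (R i)\<^sup>2)"
    unfolding R_def
    by (rule sum_power2_le_of_keeps_smallest_card_eq[OF sel_Suc_keeps_smallest
          sel_Suc_subset sel_Suc_subset]) (simp only: card_sel_Suc)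
  finally have "(\<Sum>i\<in>sel (Suc t). (D i)\<^sup>2) \<le> 0"
    using least_squares_pythagoras[OF X sel_subset Y fit_carrier fit_carrier fit_normal_equations,
        of t "Suc t"]
    unfolding R_def D_def by linarith
  then have "\<forall>i\<in>sel (Suc t). D i = 0"
    using finite_subset[OF sel_subset] by (intro sum_power2_le_0_imp_zero) simp_all
  then have diff: "fit (Suc t) - fit t = 0\<^sub>v d"
    using rows_kernel_trivial[OF X sel_subset order.refl gram_pos[OF sel_Suc_subset card_sel_Suc]]
      fit_carrier
    unfolding D_def by simp
  have "fit (Suc t) = fit t + (fit (Suc t) - fit t)"
    using fit_carrier[of t] fit_carrier[of "Suc t"] by (intro eq_vecI) auto
  also have "\<dots> = fit t" unfolding diff using fit_carrier by simp
  finally show ?thesis by (simp only: sel_Suc_eq)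
qed

lemma halt_normal_equations:
  assumes "\<not> err (Suc t) < err t"
  shows "normal_equations X Y (sel (Suc t)) (fit t)"
proof (cases t)
  case 0
  then show ?thesis using halt_first_normal_equations assms by simp
next
  case (Suc t')
  then show ?thesis using halt_later_sel_eq[of t'] assms fit_normal_equations[of t] by simp
qed

end

theorem theorem3p3:
  fixes n d c :: nat and X :: "real mat" and \<beta> \<epsilon> out Y :: "real vec" and G :: "nat set"
    and ht :: "(nat \<Rightarrow> real) \<Rightarrow> nat \<Rightarrow> nat set"
  assumes "d \<le> n"
    and "X \<in> carrier_mat n d" and "\<beta> \<in> carrier_vec d"
    and "\<epsilon> \<in> carrier_vec n" and "out \<in> carrier_vec n"
    and "G \<subseteq> {..<n}" and "\<forall>i<n. i \<notin> G \<longrightarrow> out $ i = 0"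
    and "Y = X *\<^sub>v \<beta> + \<epsilon> + out"
    and "card G \<le> c"
    and "is_HT n ht"
    and "\<forall>S. S \<subseteq> {..<n} \<and> card S = n - c \<longrightarrow>
           lambda_min (transpose_mat (rows X S) * rows X S) > 0"
    and "eta X n G (n - c) < 1 / sqrt 2"
  shows "let St = torrent_set ht X Y (n - c);
             XS = rows X St;
             w = minv (transpose_mat XS * XS) *\<^sub>v (transpose_mat XS *\<^sub>v subvec \<epsilon> St)
         in norm2 (torrent ht X Y (n - c) - \<beta>)
            \<le> norm2 w + (sqrt 2 * spec_norm (rows X (Vset n G St)) * norm2 w
                          + sqrt 2 * norm2 (subvec \<epsilon> (Vset n G St)))
                / (sqrt (lambda_min (transpose_mat XS * XS)) * (1 - sqrt 2 * eta X n G (n - c)))"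
proof -
  let ?a = "n - c"
  have Y_carrier: "Y \<in> carrier_vec n" using assms(2-5,8) by simp
  interpret torrent_run n d ?a X Y ht
    using assms(2,10,11) Y_carrier by unfold_locales auto
  obtain t0 where T: "tor_T ht X Y ?a = Suc t0" and halt: "\<not> err (Suc t0) < err t0"
    by (rule torrent_halts)
  have S: "sel (Suc t0) \<subseteq> {..<n}" by (rule sel_Suc_subset)
  have card_S: "card (sel (Suc t0)) = ?a" by (rule card_sel_Suc)
  have "card G \<le> n" using card_mono[OF _ assms(6)] by simp
  then have card_G: "card G \<le> n - card (sel (Suc t0))" using card_S assms(9) by simp
  have pos: "lambda_min (transpose_mat (rows X (sel (Suc t0))) * rows X (sel (Suc t0))) > 0"
    by (rule gram_pos[OF S card_S])
  have eta_lt: "sqrt 2 * eta X n G ?a < 1"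
    using assms(12) by (simp add: less_divide_eq mult.commute)
  show ?thesis
    unfolding Let_def torrent_def torrent_set_def tor_beta_def T diff_Suc_1
    by (rule ols_error_bound[OF assms(2-8) S card_G pos fit_carrier halt_normal_equations[OF halt]
          sel_Suc_keeps_smallest spec_norm_le_eta[OF S card_S pos] eta_lt])
qed

end
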